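(* Let $\mathcal{A}$ be a $^*$-algebra with quadratic module $\mathcal{A}^+_{\mathrm H}$, let $\mathcal{J}\in\mathcal{A}_{\mathrm H}$, let $\mathcal{D}$ be a pre-Hilbert space and $\pi:\mathcal{A}\to\mathcal{L}^*(\mathcal{D})$ an injective $^*$-representation with $\mathcal{A}^+_{\mathrm H}=\pi^{-1}(\mathcal{L}^*(\mathcal{D})^+_{\mathrm H})$. For $\mu\in\mathbb{R}$ let $\mathcal{E}_\mu=\{\psi\in\mathcal{D}:\pi(\mathcal{J})\psi=\mu\psi\}$ and $\mathcal{E}_\mu^\perp$ its orthogonal complement in $\mathcal{D}$. Let $\mu\in\mathbb{R}$ and assume $\mathcal{D}=\mathcal{E}_\mu\oplus\mathcal{E}_\mu^\perp$ as vector spaces and that there is $\epsilon>0$ with $\langle\phi,\pi((\mathcal{J}-\mu\mathbb{1})^2)\phi\rangle\ge\epsilon\langle\phi,\phi\rangle$ for all $\phi\in\mathcal{E}_\mu^\perp$. Then $$(\mathcal{A}^{\mathfrak u_1})^+_{\mathrm H}+\big(\langle\mathcal{J}-\mu\rangle\big)_{\mathrm H}=\mathcal{R}_\mu=\{a\in(\mathcal{A}^{\mathfrak u_1})_{\mathrm H}:\langle\psi,\pi(a)\psi\rangle\ge0\text{ for all }\psi\in\mathcal{E}_\mu\},$$ and the reduced algebra $\mathcal{A}_{\mu\text{-red}}$ admits an injective $^*$-representation $\pi_{\mu\text{-red}}:\mathcal{A}_{\mu\text{-red}}\to\mathcal{L}^*(\mathcal{E}_\mu)$, given by $\pi_{\mu\text{-red}}([a]_\mu)\psi=\pi(a)\psi\in\mathcal{E}_\mu$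 for $\psi\in\mathcal{E}_\mu$, $a\in\mathcal{A}^{\mathfrak u_1}$, such that $(\mathcal{A}_{\mu\text{-red}})^+_{\mathrm H}=\pi_{\mu\text{-red}}^{-1}(\mathcal{L}^*(\mathcal{E}_\mu)^+_{\mathrm H})$.
   Context: A $^*$-algebra is a unital associative complex algebra with antilinear involution satisfying $(ab)^*=b^*a^*$; $\mathcal{A}_{\mathrm H}$ denotes its Hermitian elements. A quadratic module is a subset $Q\subseteq\mathcal{A}_{\mathrm H}$ with $Q+Q\subseteq Q$, $a^*Qa\subseteq Q$ for all $a$, and $\mathbb{1}\in Q$; its support is $\operatorname{supp}Q=Q\cap(-Q)$ and $\operatorname{supp}_{\mathbb C}Q=\operatorname{supp}Q+\mathrm{i}\operatorname{supp}Q$. Here $\mathcal{A}^+_{\mathrm H}$ is a quadratic module with $\operatorname{supp}\mathcal{A}^+_{\mathrm H}=\{0\}$. For a pre-Hilbert space $\mathcal{D}$, $\mathcal{L}^*(\mathcal{D})$ is the $^*$-algebra of adjointable linear endomorphisms and $\mathcal{L}^*(\mathcal{D})^+_{\mathrm H}=\{a\text{ Hermitian}:\langle\psi,a\psi\rangle\ge0\ \forall\psi\}$. $\mathcal{A}^{\mathfrak u_1}=\{a\in\mathcal{A}:a\mathcal{J}=\mathcal{J}a\}$ with $(\mathcal{A}^{\mathfrak u_1})^+_{\mathrm H}=\mathcal{A}^+_{\mathrm H}\cap\mathcal{A}^{\mathfrak u_1}$; $\langle\mathcal{J}-\mu\rangle$ is the $^*$-ideal of $\mathcal{A}^{\mathfrak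 u_1}$ generated by $\mathcal{J}-\mu\mathbb{1}$; for a set $S$, $S_{\mathrm H}=S\cap\mathcal{A}_{\mathrm H}$. A state on $\mathcal{A}^{\mathfrak u_1}$ is a linear functional $\omega$ with $\omega(\mathbb{1})=1$, real on Hermitian elements, nonnegative on $(\mathcal{A}^{\mathfrak u_1})^+_{\mathrm H}$; it is a $\mu$-eigenstate of $\mathcal{J}$ if $\omega((\mathcal{J}-\mu\mathbb{1})^*(\mathcal{J}-\mu\mathbb{1}))=0$. $\mathcal{R}_\mu=\{a\in(\mathcal{A}^{\mathfrak u_1})_{\mathrm H}:\omega(a)\ge0\text{ for all }\mu\text{-eigenstates }\omega\}$, $\mathcal{V}_\mu=\{a\in\mathcal{A}^{\mathfrak u_1}:\omega(a)=0\text{ for all }\mu\text{-eigenstates }\omega\}$. The reduced ordered $^*$-algebra is $\mathcal{A}_{\mu\text{-red}}=\mathcal{A}^{\mathfrak u_1}/\mathcal{V}_\mu$, $[\cdot]_\mu$ the quotient map, with positive cone $(\mathcal{A}_{\mu\text{-red}})^+_{\mathrm H}=\{[r]_\mu:r\in\mathcal{R}_\mu\}$. *)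

theory Defs
  imports Complex_Main "HOL-Library.Complex_Order"
begin

text \<open>Complex numbers are ordered via HOL-Library.Complex_Order:
  z \<le> w iff Re z \<le> Re w and Im z = Im w.  In particular 0 \<le> z means z is a
  nonnegative real number.\<close>

definition star_algebra :: "(complex \<Rightarrow> 'a::ring_1 \<Rightarrow> 'a) \<Rightarrow> ('a \<Rightarrow> 'a) \<Rightarrow> bool" where
  "star_algebra smul st \<longleftrightarrow>
     (\<forall>c a b. smul c (a + b) = smul c a + smul c b) \<and>
     (\<forall>c d a. smul (c + d) a = smul c a + smul d a) \<and>
     (\<forall>c d a. smul (c * d) a = smul c (smul d a)) \<and>
     (\<forall>a. smul 1 a = a) \<and>
     (\<forall>c a b. smul c (a * b) = smul c a * b \<and> smul c (a * b) = a * smul c b) \<and>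
     (\<forall>a b. st (a + b) = st a + st b) \<and>
     (\<forall>c a. st (smul c a) = smul (cnj c) (st a)) \<and>
     (\<forall>a. st (st a) = a) \<and>
     (\<forall>a b. st (a * b) = st b * st a)"

definition hermitian_part :: "('a \<Rightarrow> 'a) \<Rightarrow> 'a set \<Rightarrow> 'a set" where
  "hermitian_part st S = {a \<in> S. st a = a}"

definition quadratic_module :: "('a::ring_1 \<Rightarrow> 'a) \<Rightarrow> 'a set \<Rightarrow> bool" where
  "quadratic_module st Q \<longleftrightarrow>
     Q \<subseteq> {a. st a = a} \<and>
     (\<forall>x\<in>Q. \<forall>y\<in>Q. x + y \<in> Q) \<and>
     (\<forall>a. \<forall>q\<in>Q. st a * q * a \<in> Q) \<and>
     1 \<in> Q"

definition supp :: "'a::ab_group_add set \<Rightarrow> 'a set" where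
  "supp Q = Q \<inter> uminus ` Q"

text \<open>A pre-Hilbert space: complex vector space (carrier the whole type 'h) with an inner
  product, antilinear in the first and linear in the second argument.\<close>

definition pre_hilbert :: "(complex \<Rightarrow> 'h::ab_group_add \<Rightarrow> 'h) \<Rightarrow> ('h \<Rightarrow> 'h \<Rightarrow> complex) \<Rightarrow> bool" where
  "pre_hilbert hsmul inn \<longleftrightarrow>
     (\<forall>c x y. hsmul c (x + y) = hsmul c x + hsmul c y) \<and>
     (\<forall>c d x. hsmul (c + d) x = hsmul c x + hsmul d x) \<and>
     (\<forall>c d x. hsmul (c * d) x = hsmul c (hsmul d x)) \<and>
     (\<forall>x. hsmul 1 x = x) \<and>
     (\<forall>x y z. inn x (y + z) = inn x y + inn x z) \<and>
     (\<forall>c x y. inn x (hsmul c y) = c * inn x y) \<and>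
     (\<forall>x y. inn y x = cnj (inn x y)) \<and>
     (\<forall>x. 0 \<le> inn x x) \<and>
     (\<forall>x. inn x x = 0 \<longrightarrow> x = 0)"

text \<open>A *-representation rho of the *-algebra into L*(D): every rho a is linear, rho is linear,
  multiplicative and unital, and rho (st a) is the adjoint of rho a (so every rho a is
  adjointable, i.e. lies in L*(D)).\<close>

definition star_rep ::
  "(complex \<Rightarrow> 'a::ring_1 \<Rightarrow> 'a) \<Rightarrow> ('a \<Rightarrow> 'a) \<Rightarrow> (complex \<Rightarrow> 'h::ab_group_add \<Rightarrow> 'h) \<Rightarrow>
   ('h \<Rightarrow> 'h \<Rightarrow> complex) \<Rightarrow> ('a \<Rightarrow> 'h \<Rightarrow> 'h) \<Rightarrow> bool" where
  "star_rep smul st hsmul inn rho \<longleftrightarrow>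
     (\<forall>a x y. rho a (x + y) = rho a x + rho a y) \<and>
     (\<forall>a c x. rho a (hsmul c x) = hsmul c (rho a x)) \<and>
     (\<forall>a b x. rho (a + b) x = rho a x + rho b x) \<and>
     (\<forall>c a x. rho (smul c a) x = hsmul c (rho a x)) \<and>
     (\<forall>a b. rho (a * b) = rho a \<circ> rho b) \<and>
     rho 1 = id \<and>
     (\<forall>a x y. inn x (rho a y) = inn (rho (st a) x) y)"

text \<open>Positive Hermitian operators on a subspace S (for S = UNIV: L*(D)^+_H).\<close>

definition pos_op_on :: "'h set \<Rightarrow> ('h \<Rightarrow> 'h \<Rightarrow> complex) \<Rightarrow> ('h \<Rightarrow> 'h) \<Rightarrow> bool" where
  "pos_op_on S inn T \<longleftrightarrow>
     (\<forall>x\<in>S. \<forall>y\<in>S. inn x (T y) = inn (T x) y) \<and> (\<forall>x\<in>S. 0 \<le> inn x (T x))"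

definition eigenspace :: "(complex \<Rightarrow> 'h \<Rightarrow> 'h) \<Rightarrow> ('h \<Rightarrow> 'h) \<Rightarrow> real \<Rightarrow> 'h set" where
  "eigenspace hsmul T \<mu> = {x. T x = hsmul (of_real \<mu>) x}"

definition orth_compl :: "('h \<Rightarrow> 'h \<Rightarrow> complex) \<Rightarrow> 'h set \<Rightarrow> 'h set" where
  "orth_compl inn S = {y. \<forall>x\<in>S. inn x y = 0}"

definition u1 :: "'a::ring_1 \<Rightarrow> 'a set" where
  "u1 J = {a. a * J = J * a}"

definition star_ideal_in :: "(complex \<Rightarrow> 'a::ring_1 \<Rightarrow> 'a) \<Rightarrow> ('a \<Rightarrow> 'a) \<Rightarrow> 'a set \<Rightarrow> 'a set \<Rightarrow> bool" where
  "star_ideal_in smul st B I \<longleftrightarrow>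
     I \<subseteq> B \<and> 0 \<in> I \<and>
     (\<forall>x\<in>I. \<forall>y\<in>I. x + y \<in> I) \<and>
     (\<forall>c. \<forall>x\<in>I. smul c x \<in> I) \<and>
     (\<forall>b\<in>B. \<forall>x\<in>I. b * x \<in> I \<and> x * b \<in> I) \<and>
     (\<forall>x\<in>I. st x \<in> I)"

definition gen_star_ideal :: "(complex \<Rightarrow> 'a::ring_1 \<Rightarrow> 'a) \<Rightarrow> ('a \<Rightarrow> 'a) \<Rightarrow> 'a set \<Rightarrow> 'a \<Rightarrow> 'a set" where
  "gen_star_ideal smul st B g = \<Inter>{I. star_ideal_in smul st B I \<and> g \<in> I}"

text \<open>States on the *-subalgebra B with positive cone P \<inter> B.  Only the values on B matter.\<close>

definition is_state :: "(complex \<Rightarrow> 'a::ring_1 \<Rightarrow> 'a) \<Rightarrow> ('a \<Rightarrow> 'a) \<Rightarrow> 'a set \<Rightarrow> 'a set \<Rightarrow> ('a \<Rightarrow> complex) \<Rightarrow> bool" where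
  "is_state smul st P B \<omega> \<longleftrightarrow>
     (\<forall>a\<in>B. \<forall>b\<in>B. \<omega> (a + b) = \<omega> a + \<omega> b) \<and>
     (\<forall>c. \<forall>a\<in>B. \<omega> (smul c a) = c * \<omega> a) \<and>
     \<omega> 1 = 1 \<and>
     (\<forall>a\<in>B. st a = a \<longrightarrow> \<omega> a \<in> \<real>) \<and>
     (\<forall>a\<in>B \<inter> P. 0 \<le> \<omega> a)"

definition J_shift :: "(complex \<Rightarrow> 'a::ring_1 \<Rightarrow> 'a) \<Rightarrow> 'a \<Rightarrow> real \<Rightarrow> 'a" where
  "J_shift smul J \<mu> = J - smul (of_real \<mu>) 1"

definition eigenstate ::
  "(complex \<Rightarrow> 'a::ring_1 \<Rightarrow> 'a) \<Rightarrow> ('a \<Rightarrow> 'a) \<Rightarrow> 'a set \<Rightarrow> 'a \<Rightarrow> real \<Rightarrow> ('a \<Rightarrow> complex) \<Rightarrow> bool" where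
  "eigenstate smul st P J \<mu> \<omega> \<longleftrightarrow>
     is_state smul st P (u1 J) \<omega> \<and>
     \<omega> (st (J_shift smul J \<mu>) * J_shift smul J \<mu>) = 0"

definition R_mu :: "(complex \<Rightarrow> 'a::ring_1 \<Rightarrow> 'a) \<Rightarrow> ('a \<Rightarrow> 'a) \<Rightarrow> 'a set \<Rightarrow> 'a \<Rightarrow> real \<Rightarrow> 'a set" where
  "R_mu smul st P J \<mu> =
     {a \<in> hermitian_part st (u1 J). \<forall>\<omega>. eigenstate smul st P J \<mu> \<omega> \<longrightarrow> 0 \<le> \<omega> a}"

definition V_mu :: "(complex \<Rightarrow> 'a::ring_1 \<Rightarrow> 'a) \<Rightarrow> ('a \<Rightarrow> 'a) \<Rightarrow> 'a set \<Rightarrow> 'a \<Rightarrow> real \<Rightarrow> 'a set" where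
  "V_mu smul st P J \<mu> =
     {a \<in> u1 J. \<forall>\<omega>. eigenstate smul st P J \<mu> \<omega> \<longrightarrow> \<omega> a = 0}"

text \<open>The reduced algebra A_mu-red = A^{u1} / V_mu, realised as the set of cosets
  red_class a = a + V_mu (a in A^{u1}); its positive cone is the set of classes of
  elements of R_mu.\<close>

definition red_class :: "(complex \<Rightarrow> 'a::ring_1 \<Rightarrow> 'a) \<Rightarrow> ('a \<Rightarrow> 'a) \<Rightarrow> 'a set \<Rightarrow> 'a \<Rightarrow> real \<Rightarrow> 'a \<Rightarrow> 'a set" where
  "red_class smul st P J \<mu> a = {b \<in> u1 J. a - b \<in> V_mu smul st P J \<mu>}"

definition red_algebra :: "(complex \<Rightarrow> 'a::ring_1 \<Rightarrow> 'a) \<Rightarrow> ('a \<Rightarrow> 'a) \<Rightarrow> 'a set \<Rightarrow> 'a \<Rightarrow> real \<Rightarrow> 'a set set" where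
  "red_algebra smul st P J \<mu> = red_class smul st P J \<mu> ` u1 J"

definition red_pos_cone :: "(complex \<Rightarrow> 'a::ring_1 \<Rightarrow> 'a) \<Rightarrow> ('a \<Rightarrow> 'a) \<Rightarrow> 'a set \<Rightarrow> 'a \<Rightarrow> real \<Rightarrow> 'a set set" where
  "red_pos_cone smul st P J \<mu> = red_class smul st P J \<mu> ` R_mu smul st P J \<mu>"

end

theory Submission
  imports Defs
begin

(* Write K = J - mu 1 and E for the mu-eigenspace of pi(J).  Every mu-eigenstate vanishes on the
   ideal A^{u1} K generated by K (a Cauchy-Schwarz argument using omega(K K) = 0), so the cone
   (A^{u1})^+_H + <K>_H lies in R_mu; vector states of E are mu-eigenstates, so R_mu lies in the
   set T of Hermitian a in A^{u1} that are positive on E.  Conversely, for a in T the element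
   a + (K + a K a) K / (2 eps) is positive on E (where pi(K) vanishes) and, by the spectral gap,
   also on the complement of E, which A^{u1} leaves invariant; hence T lies in the cone.
   Polarization on E then identifies V_mu with the elements of A^{u1} vanishing on E, so the
   classes [a]_mu are exactly the restrictions of pi(a) to E. *)

lemma complex_nonneg_affine_imp_zero:
  fixes A s :: complex
  assumes nonneg: "\<And>t::real. 0 \<le> A + of_real t * s"
  shows "s = 0"
proof -
  have "Im s = 0"
    using nonneg[of 0] nonneg[of 1] by (auto simp: less_eq_complex_def)
  moreover have "Re s = 0"
  proof (rule ccontr)
    assume "Re s \<noteq> 0"
    then have "Re (A + of_real (- (Re A + 1) / Re s) * s) = -1"
      by simp
    with nonneg[of "- (Re A + 1) / Re s"] show False
      by (simp add: less_eq_complex_def)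
  qed
  ultimately show ?thesis
    by (simp add: complex_eq_iff)
qed

lemma complex_divide_nonneg:
  fixes p r :: complex
  assumes "0 \<le> p" "0 \<le> r"
  shows "0 \<le> p / r"
  using assms by (auto simp: less_eq_complex_def Re_divide Im_divide)

locale star_alg =
  fixes smul :: "complex \<Rightarrow> 'a::ring_1 \<Rightarrow> 'a" and st :: "'a \<Rightarrow> 'a"
  assumes star_algebra: "star_algebra smul st"
begin

lemma smul_add_right [simp]: "smul c (a + b) = smul c a + smul c b"
  using star_algebra unfolding star_algebra_def by blast

lemma smul_add_left: "smul (c + d) a = smul c a + smul d a"
  using star_algebra unfolding star_algebra_def by blast

lemma smul_smul [simp]: "smul c (smul d a) = smul (c * d) a"
  using star_algebra unfolding star_algebra_def by simp

lemma smul_one [simp]: "smul 1 a = a"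
  using star_algebra unfolding star_algebra_def by blast

lemma mult_smul_left [simp]: "smul c a * b = smul c (a * b)"
  using star_algebra unfolding star_algebra_def by simp

lemma mult_smul_right [simp]: "a * smul c b = smul c (a * b)"
  using star_algebra unfolding star_algebra_def by simp

lemma st_add [simp]: "st (a + b) = st a + st b"
  using star_algebra unfolding star_algebra_def by blast

lemma st_smul [simp]: "st (smul c a) = smul (cnj c) (st a)"
  using star_algebra unfolding star_algebra_def by blast

lemma st_st [simp]: "st (st a) = a"
  using star_algebra unfolding star_algebra_def by blast

lemma st_mult [simp]: "st (a * b) = st b * st a"
  using star_algebra unfolding star_algebra_def by blast

lemma smul_zero_left [simp]: "smul 0 a = 0"
  using smul_add_left[of 0 0 a] by simp

lemma smul_zero_right [simp]: "smul c 0 = 0"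
  using smul_add_right[of c 0 0] by simp

lemma smul_minus_right [simp]: "smul c (- a) = - smul c a"
  by (metis smul_add_right[of c a "- a"] add.right_inverse smul_zero_right add.inverse_unique)

lemma smul_diff_right [simp]: "smul c (a - b) = smul c a - smul c b"
  by (simp add: diff_conv_add_uminus del: add_uminus_conv_diff)

lemma smul_minus_left: "smul (- c) a = - smul c a"
  by (metis smul_add_left[of c "- c" a] add.right_inverse smul_zero_left add.inverse_unique)

lemma st_zero [simp]: "st 0 = 0"
  using st_add[of 0 0] by simp

lemma st_minus [simp]: "st (- a) = - st a"
  by (metis st_add[of a "- a"] add.right_inverse st_zero add.inverse_unique)

lemma st_diff [simp]: "st (a - b) = st a - st b"
  by (simp add: diff_conv_add_uminus del: add_uminus_conv_diff)

lemma st_one [simp]: "st 1 = 1"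
  by (metis st_mult st_st mult_1_left)

definition real_part :: "'a \<Rightarrow> 'a" where
  "real_part a = smul (1/2) (a + st a)"

definition imag_part :: "'a \<Rightarrow> 'a" where
  "imag_part a = smul (- \<i>/2) (a - st a)"

lemma st_real_part [simp]: "st (real_part a) = real_part a"
  by (simp add: real_part_def add.commute)

lemma st_imag_part [simp]: "st (imag_part a) = imag_part a"
  by (simp add: imag_part_def smul_minus_left)

lemma real_imag_decomposition: "a = real_part a + smul \<i> (imag_part a)"
proof -
  have "real_part a + smul \<i> (imag_part a) = smul (1/2) a + smul (1/2) a"
    by (simp add: real_part_def imag_part_def)
  also have "\<dots> = a"
    by (simp flip: smul_add_left)
  finally show ?thesis ..
qed

lemma u1_iff: "a \<in> u1 J \<longleftrightarrow> a * J = J * a"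
  by (simp add: u1_def)

lemma u1_one [simp]: "1 \<in> u1 J"
  by (simp add: u1_iff)

lemma u1_zero [simp]: "0 \<in> u1 J"
  by (simp add: u1_iff)

lemma u1_self [simp]: "J \<in> u1 J"
  by (simp add: u1_iff)

lemma u1_add: "a \<in> u1 J \<Longrightarrow> b \<in> u1 J \<Longrightarrow> a + b \<in> u1 J"
  by (simp add: u1_iff algebra_simps)

lemma u1_diff: "a \<in> u1 J \<Longrightarrow> b \<in> u1 J \<Longrightarrow> a - b \<in> u1 J"
  by (simp add: u1_iff algebra_simps)

lemma u1_minus: "a \<in> u1 J \<Longrightarrow> - a \<in> u1 J"
  by (simp add: u1_iff)

lemma u1_mult: "a \<in> u1 J \<Longrightarrow> b \<in> u1 J \<Longrightarrow> a * b \<in> u1 J"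
  by (simp add: u1_iff) (metis mult.assoc)

lemma u1_smul: "a \<in> u1 J \<Longrightarrow> smul c a \<in> u1 J"
  by (simp add: u1_iff)

lemma u1_st: "st J = J \<Longrightarrow> a \<in> u1 J \<Longrightarrow> st a \<in> u1 J"
  by (simp add: u1_iff) (metis st_mult)

lemma u1_real_part: "st J = J \<Longrightarrow> a \<in> u1 J \<Longrightarrow> real_part a \<in> u1 J"
  by (simp add: real_part_def u1_add u1_smul u1_st)

lemma u1_imag_part: "st J = J \<Longrightarrow> a \<in> u1 J \<Longrightarrow> imag_part a \<in> u1 J"
  by (simp add: imag_part_def u1_diff u1_smul u1_st)

lemma J_shift_in_u1 [simp]: "J_shift smul J \<mu> \<in> u1 J"
  by (simp add: J_shift_def u1_diff u1_smul)

lemma st_J_shift [simp]: "st J = J \<Longrightarrow> st (J_shift smul J \<mu>) = J_shift smul J \<mu>"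
  by (simp add: J_shift_def)

lemma J_shift_commute: "b \<in> u1 J \<Longrightarrow> J_shift smul J \<mu> * b = b * J_shift smul J \<mu>"
  by (simp add: J_shift_def u1_iff algebra_simps)

lemma star_ideal_J_shift_multiples:
  assumes J_herm: "st J = J"
  shows "star_ideal_in smul st (u1 J) ((\<lambda>b. b * J_shift smul J \<mu>) ` u1 J)"
proof -
  let ?K = "J_shift smul J \<mu>"
  let ?M = "(\<lambda>b. b * ?K) ` u1 J"
  have "0 \<in> ?M"
    by (rule image_eqI[of _ _ 0]) simp_all
  moreover have "b * ?K + b' * ?K \<in> ?M" if "b \<in> u1 J" "b' \<in> u1 J" for b b'
    using that by (intro image_eqI[of _ _ "b + b'"]) (simp_all add: distrib_right u1_add)
  moreover have "smul c (b * ?K) \<in> ?M" if "b \<in> u1 J" for b c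
    using that by (intro image_eqI[of _ _ "smul c b"]) (simp_all add: u1_smul)
  moreover have "a * (b * ?K) \<in> ?M \<and> (b * ?K) * a \<in> ?M" if "a \<in> u1 J" "b \<in> u1 J" for a b
  proof -
    have "a * (b * ?K) = (a * b) * ?K" "(b * ?K) * a = (b * a) * ?K"
      using J_shift_commute[OF that(1)] by (simp_all add: mult.assoc)
    then show ?thesis
      using that by (auto intro: u1_mult)
  qed
  moreover have "st (b * ?K) \<in> ?M" if "b \<in> u1 J" for b
  proof -
    have "st (b * ?K) = st b * ?K"
      using J_herm J_shift_commute[OF u1_st[OF J_herm that]] by simp
    then show ?thesis
      using u1_st[OF J_herm that] by auto
  qed
  ultimately show ?thesis
    unfolding star_ideal_in_def by (auto intro: u1_mult)
qed

lemma gen_star_ideal_J_shift: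
  assumes "st J = J"
  shows "gen_star_ideal smul st (u1 J) (J_shift smul J \<mu>) = (\<lambda>b. b * J_shift smul J \<mu>) ` u1 J"
proof
  have "J_shift smul J \<mu> \<in> (\<lambda>b. b * J_shift smul J \<mu>) ` u1 J"
    by (rule image_eqI[of _ _ 1]) simp_all
  then show "gen_star_ideal smul st (u1 J) (J_shift smul J \<mu>) \<subseteq> (\<lambda>b. b * J_shift smul J \<mu>) ` u1 J"
    unfolding gen_star_ideal_def using star_ideal_J_shift_multiples[OF assms] by blast
  show "(\<lambda>b. b * J_shift smul J \<mu>) ` u1 J \<subseteq> gen_star_ideal smul st (u1 J) (J_shift smul J \<mu>)"
    unfolding gen_star_ideal_def star_ideal_in_def by blast
qed

lemma state_add: "is_state smul st P B \<omega> \<Longrightarrow> a \<in> B \<Longrightarrow> b \<in> B \<Longrightarrow> \<omega> (a + b) = \<omega> a + \<omega> b"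
  unfolding is_state_def by blast

lemma state_smul: "is_state smul st P B \<omega> \<Longrightarrow> a \<in> B \<Longrightarrow> \<omega> (smul c a) = c * \<omega> a"
  unfolding is_state_def by blast

lemma state_nonneg: "is_state smul st P B \<omega> \<Longrightarrow> a \<in> B \<Longrightarrow> a \<in> P \<Longrightarrow> 0 \<le> \<omega> a"
  unfolding is_state_def by blast

lemma state_minus: "is_state smul st P B \<omega> \<Longrightarrow> a \<in> B \<Longrightarrow> \<omega> (- a) = - \<omega> a"
  using state_smul[of P B \<omega> a "- 1"] smul_minus_left[of 1 a] by simp

lemma eigenstate_vanishes_on_J_shift_ideal:
  assumes qm: "quadratic_module st P" and J_herm: "st J = J"
    and eig: "eigenstate smul st P J \<mu> \<omega>" and b: "b \<in> u1 J"
  shows "\<omega> (b * J_shift smul J \<mu>) = 0"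
proof -
  let ?K = "J_shift smul J \<mu>"
  have \<omega>: "is_state smul st P (u1 J) \<omega>" and KK: "\<omega> (?K * ?K) = 0"
    using eig J_herm unfolding eigenstate_def by auto
  have sb: "st b \<in> u1 J"
    using u1_st[OF J_herm b] .
  \<comment> \<open>positivity of z^* z for z = b^* + tau K, where the tau-quadratic term drops out since omega(K K) = 0\<close>
  have nonneg: "0 \<le> \<omega> (b * st b) + \<tau> * \<omega> (b * ?K) + cnj \<tau> * \<omega> (?K * st b)" for \<tau>
  proof -
    define z where "z = st b + smul \<tau> ?K"
    have z: "z \<in> u1 J"
      unfolding z_def using sb by (simp add: u1_add u1_smul)
    have "st z * z \<in> P"
      using qm unfolding quadratic_module_def by (metis mult_1_right)
    then have "0 \<le> \<omega> (st z * z)"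
      using state_nonneg[OF \<omega> u1_mult[OF u1_st[OF J_herm z] z]] by blast
    moreover have "st z * z = b * st b + smul \<tau> (b * ?K) + smul (cnj \<tau>) (?K * st b)
                               + smul (\<tau> * cnj \<tau>) (?K * ?K)"
      unfolding z_def using J_herm by (simp add: distrib_left distrib_right add.assoc)
    ultimately show ?thesis
      using b sb KK by (simp add: state_add[OF \<omega>] state_smul[OF \<omega>] u1_add u1_smul u1_mult)
  qed
  have sum: "\<omega> (b * ?K) + \<omega> (?K * st b) = 0"
    by (rule complex_nonneg_affine_imp_zero[of "\<omega> (b * st b)"])
      (use nonneg[of "of_real _"] in \<open>simp add: distrib_left add.assoc\<close>)
  have "\<i> * \<omega> (b * ?K) - \<i> * \<omega> (?K * st b) = 0"
    by (rule complex_nonneg_affine_imp_zero[of "\<omega> (b * st b)"])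
      (use nonneg[of "\<i> * of_real _"] in \<open>simp add: algebra_simps\<close>)
  then have "\<omega> (?K * st b) = \<omega> (b * ?K)"
    by (simp add: right_diff_distrib[symmetric])
  with sum show ?thesis
    by simp
qed

lemma positive_plus_ideal_subset_R_mu:
  assumes qm: "quadratic_module st P" and J_herm: "st J = J"
    and x: "x \<in> P \<inter> u1 J"
    and y: "y \<in> hermitian_part st (gen_star_ideal smul st (u1 J) (J_shift smul J \<mu>))"
  shows "x + y \<in> R_mu smul st P J \<mu>"
proof -
  obtain b where b: "b \<in> u1 J" and yb: "y = b * J_shift smul J \<mu>" and st_y: "st y = y"
    using y unfolding hermitian_part_def gen_star_ideal_J_shift[OF J_herm] by blast
  have x_U: "x \<in> u1 J" and x_P: "x \<in> P" and y_U: "y \<in> u1 J"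
    using x b yb by (auto intro: u1_mult)
  have "st x = x"
    using qm x_P unfolding quadratic_module_def by blast
  then have "x + y \<in> hermitian_part st (u1 J)"
    using x_U y_U st_y by (simp add: hermitian_part_def u1_add)
  moreover have "0 \<le> \<omega> (x + y)" if eig: "eigenstate smul st P J \<mu> \<omega>" for \<omega>
  proof -
    have \<omega>: "is_state smul st P (u1 J) \<omega>"
      using eig unfolding eigenstate_def by blast
    then show ?thesis
      using state_add[OF \<omega> x_U y_U] state_nonneg[OF \<omega> x_U x_P]
        eigenstate_vanishes_on_J_shift_ideal[OF qm J_herm eig b] yb by simp
  qed
  ultimately show ?thesis
    unfolding R_mu_def by blast
qed

end

locale pre_hilbert_space =
  fixes hsmul :: "complex \<Rightarrow> 'h::ab_group_add \<Rightarrow> 'h" and inn :: "'h \<Rightarrow> 'h \<Rightarrow> complex"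
  assumes pre_hilbert: "pre_hilbert hsmul inn"
begin

lemma hsmul_add_right [simp]: "hsmul c (x + y) = hsmul c x + hsmul c y"
  using pre_hilbert unfolding pre_hilbert_def by blast

lemma hsmul_add_left: "hsmul (c + d) x = hsmul c x + hsmul d x"
  using pre_hilbert unfolding pre_hilbert_def by blast

lemma hsmul_hsmul [simp]: "hsmul c (hsmul d x) = hsmul (c * d) x"
  using pre_hilbert unfolding pre_hilbert_def by simp

lemma hsmul_one [simp]: "hsmul 1 x = x"
  using pre_hilbert unfolding pre_hilbert_def by blast

lemma inn_add_right [simp]: "inn x (y + z) = inn x y + inn x z"
  using pre_hilbert unfolding pre_hilbert_def by blast

lemma inn_hsmul_right [simp]: "inn x (hsmul c y) = c * inn x y"
  using pre_hilbert unfolding pre_hilbert_def by blast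

lemma inn_commute: "inn y x = cnj (inn x y)"
  using pre_hilbert unfolding pre_hilbert_def by blast

lemma inn_self_nonneg [simp]: "0 \<le> inn x x"
  using pre_hilbert unfolding pre_hilbert_def by blast

lemma inn_self_eq_0: "inn x x = 0 \<Longrightarrow> x = 0"
  using pre_hilbert unfolding pre_hilbert_def by blast

lemma hsmul_zero_right [simp]: "hsmul c 0 = 0"
  using hsmul_add_right[of c 0 0] by simp

lemma hsmul_minus_right [simp]: "hsmul c (- x) = - hsmul c x"
  by (metis hsmul_add_right[of c x "- x"] add.right_inverse hsmul_zero_right add.inverse_unique)

lemma hsmul_diff_right [simp]: "hsmul c (x - y) = hsmul c x - hsmul c y"
  by (simp add: diff_conv_add_uminus del: add_uminus_conv_diff)

lemma inn_add_left [simp]: "inn (x + y) z = inn x z + inn y z"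
  by (metis inn_commute inn_add_right complex_cnj_add)

lemma inn_hsmul_left [simp]: "inn (hsmul c x) y = cnj c * inn x y"
  by (metis inn_commute inn_hsmul_right complex_cnj_mult)

lemma inn_zero_right [simp]: "inn x 0 = 0"
  using inn_add_right[of x 0 0] by simp

lemma inn_zero_left [simp]: "inn 0 x = 0"
  using inn_add_left[of 0 0 x] by simp

lemma inn_self_eq_0_iff [simp]: "inn x x = 0 \<longleftrightarrow> x = 0"
  using inn_self_eq_0 by auto

lemma inn_minus_right [simp]: "inn x (- y) = - inn x y"
  by (metis inn_add_right[of x y "- y"] add.right_inverse inn_zero_right add.inverse_unique)

lemma inn_minus_left [simp]: "inn (- x) y = - inn x y"
  by (metis inn_add_left[of x "- x" y] add.right_inverse inn_zero_left add.inverse_unique)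

lemma inn_diff_right [simp]: "inn x (y - z) = inn x y - inn x z"
  by (simp add: diff_conv_add_uminus del: add_uminus_conv_diff)

lemma inn_diff_left [simp]: "inn (x - y) z = inn x z - inn y z"
  by (simp add: diff_conv_add_uminus del: add_uminus_conv_diff)

lemma inn_cross_term_lower_bound:
  assumes "inn g f = inn f g"
  shows "0 \<le> inn f g + (inn f f + inn g g) / 2"
proof -
  define w where "w = inn f g + (inn f f + inn g g) / 2"
  have "inn (f + g) (f + g) = 2 * w"
    using assms by (simp add: w_def field_simps)
  then have "0 \<le> 2 * w"
    using inn_self_nonneg[of "f + g"] by argo
  then show ?thesis
    by (simp add: w_def[symmetric] less_eq_complex_def)
qed

end

locale star_representation = star_alg smul st + pre_hilbert_space hsmul inn
  for smul :: "complex \<Rightarrow> 'a::ring_1 \<Rightarrow> 'a" and st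
    and hsmul :: "complex \<Rightarrow> 'h::ab_group_add \<Rightarrow> 'h" and inn +
  fixes \<pi> :: "'a \<Rightarrow> 'h \<Rightarrow> 'h"
  assumes star_rep: "star_rep smul st hsmul inn \<pi>"
begin

lemma rep_add_right [simp]: "\<pi> a (x + y) = \<pi> a x + \<pi> a y"
  using star_rep unfolding star_rep_def by blast

lemma rep_hsmul [simp]: "\<pi> a (hsmul c x) = hsmul c (\<pi> a x)"
  using star_rep unfolding star_rep_def by blast

lemma rep_add [simp]: "\<pi> (a + b) x = \<pi> a x + \<pi> b x"
  using star_rep unfolding star_rep_def by blast

lemma rep_smul [simp]: "\<pi> (smul c a) x = hsmul c (\<pi> a x)"
  using star_rep unfolding star_rep_def by blast

lemma rep_mult [simp]: "\<pi> (a * b) x = \<pi> a (\<pi> b x)"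
  using star_rep unfolding star_rep_def by simp

lemma rep_one [simp]: "\<pi> 1 x = x"
  using star_rep unfolding star_rep_def by simp

lemma rep_adjoint: "inn x (\<pi> a y) = inn (\<pi> (st a) x) y"
  using star_rep unfolding star_rep_def by blast

lemma rep_zero_right [simp]: "\<pi> a 0 = 0"
  using rep_add_right[of a 0 0] by simp

lemma rep_zero [simp]: "\<pi> 0 x = 0"
  using rep_add[of 0 0 x] by simp

lemma rep_minus_right [simp]: "\<pi> a (- x) = - \<pi> a x"
  by (metis rep_add_right[of a x "- x"] add.right_inverse rep_zero_right add.inverse_unique)

lemma rep_minus [simp]: "\<pi> (- a) x = - \<pi> a x"
  by (metis rep_add[of a "- a" x] add.right_inverse rep_zero add.inverse_unique)

lemma rep_diff_right [simp]: "\<pi> a (x - y) = \<pi> a x - \<pi> a y"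
  by (simp add: diff_conv_add_uminus del: add_uminus_conv_diff)

lemma rep_diff [simp]: "\<pi> (a - b) x = \<pi> a x - \<pi> b x"
  by (simp add: diff_conv_add_uminus del: add_uminus_conv_diff)

lemma rep_adjoint_left: "inn (\<pi> a x) y = inn x (\<pi> (st a) y)"
  using rep_adjoint[of x "st a" y] by simp

lemma inn_rep_st_mult_self: "inn x (\<pi> (st c * c) x) = inn (\<pi> c x) (\<pi> c x)"
  using rep_adjoint[of x "st c" "\<pi> c x"] by simp

lemma inn_rep_hermitian_real: "st a = a \<Longrightarrow> inn x (\<pi> a x) \<in> \<real>"
  by (metis Reals_cnj_iff inn_commute rep_adjoint)

lemma eigenspace_iff: "x \<in> eigenspace hsmul (\<pi> J) \<mu> \<longleftrightarrow> \<pi> J x = hsmul (of_real \<mu>) x"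
  by (simp add: eigenspace_def)

lemma eigenspace_add: "x \<in> eigenspace hsmul (\<pi> J) \<mu> \<Longrightarrow> y \<in> eigenspace hsmul (\<pi> J) \<mu> \<Longrightarrow>
    x + y \<in> eigenspace hsmul (\<pi> J) \<mu>"
  by (simp add: eigenspace_iff)

lemma eigenspace_diff: "x \<in> eigenspace hsmul (\<pi> J) \<mu> \<Longrightarrow> y \<in> eigenspace hsmul (\<pi> J) \<mu> \<Longrightarrow>
    x - y \<in> eigenspace hsmul (\<pi> J) \<mu>"
  by (simp add: eigenspace_iff)

lemma eigenspace_hsmul: "x \<in> eigenspace hsmul (\<pi> J) \<mu> \<Longrightarrow> hsmul c x \<in> eigenspace hsmul (\<pi> J) \<mu>"
  by (simp add: eigenspace_iff mult.commute)

lemma rep_J_shift_eigenspace: "x \<in> eigenspace hsmul (\<pi> J) \<mu> \<Longrightarrow> \<pi> (J_shift smul J \<mu>) x = 0"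
  by (simp add: eigenspace_iff J_shift_def)

lemma u1_maps_eigenspace:
  assumes "a \<in> u1 J" "x \<in> eigenspace hsmul (\<pi> J) \<mu>"
  shows "\<pi> a x \<in> eigenspace hsmul (\<pi> J) \<mu>"
proof -
  have "\<pi> J (\<pi> a x) = \<pi> (a * J) x"
    using assms(1) by (simp add: u1_iff)
  then show ?thesis
    using assms(2) by (simp add: eigenspace_iff)
qed

lemma u1_maps_orth_compl:
  assumes J_herm: "st J = J" and a: "a \<in> u1 J"
    and f: "f \<in> orth_compl inn (eigenspace hsmul (\<pi> J) \<mu>)"
  shows "\<pi> a f \<in> orth_compl inn (eigenspace hsmul (\<pi> J) \<mu>)"
  using f u1_maps_eigenspace[OF u1_st[OF J_herm a]]
  by (simp add: orth_compl_def rep_adjoint[of _ a])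

lemma eigenspace_orthogonal_imp_zero:
  "v \<in> eigenspace hsmul (\<pi> J) \<mu> \<Longrightarrow> \<forall>x\<in>eigenspace hsmul (\<pi> J) \<mu>. inn x v = 0 \<Longrightarrow> v = 0"
  by auto

lemma vanishing_quadratic_form_on_eigenspace:
  assumes a: "a \<in> u1 J" and zero: "\<forall>x\<in>eigenspace hsmul (\<pi> J) \<mu>. inn x (\<pi> a x) = 0"
    and y: "y \<in> eigenspace hsmul (\<pi> J) \<mu>"
  shows "\<pi> a y = 0"
proof (rule eigenspace_orthogonal_imp_zero[OF u1_maps_eigenspace[OF a y]], intro ballI)
  fix x assume x: "x \<in> eigenspace hsmul (\<pi> J) \<mu>"
  \<comment> \<open>polarization with the vectors x + y and x + i y\<close>
  have "inn x (\<pi> a x) = 0" "inn y (\<pi> a y) = 0"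
    using zero x y by blast+
  moreover have "inn (x + y) (\<pi> a (x + y)) = 0"
    using zero eigenspace_add[OF x y] by blast
  moreover have "inn (x + hsmul \<i> y) (\<pi> a (x + hsmul \<i> y)) = 0"
    using zero eigenspace_add[OF x eigenspace_hsmul[OF y]] by blast
  ultimately have "inn x (\<pi> a y) + inn y (\<pi> a x) = 0" "\<i> * (inn x (\<pi> a y) - inn y (\<pi> a x)) = 0"
    by (simp_all add: ac_simps right_diff_distrib)
  then show "inn x (\<pi> a y) = 0"
    by (simp add: algebra_simps)
qed

lemma adjoint_vanishes_on_eigenspace:
  assumes J_herm: "st J = J" and a: "a \<in> u1 J"
    and zero: "\<forall>x\<in>eigenspace hsmul (\<pi> J) \<mu>. \<pi> a x = 0" and y: "y \<in> eigenspace hsmul (\<pi> J) \<mu>"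
  shows "\<pi> (st a) y = 0"
  using zero eigenspace_orthogonal_imp_zero[OF u1_maps_eigenspace[OF u1_st[OF J_herm a] y]]
  by (simp add: rep_adjoint[of _ "st a"])

definition vector_state :: "'h \<Rightarrow> 'a \<Rightarrow> complex" where
  "vector_state \<psi> a = inn \<psi> (\<pi> a \<psi>) / inn \<psi> \<psi>"

lemma vector_state_eigenstate:
  assumes P_nonneg: "P \<subseteq> {a. \<forall>\<psi>. 0 \<le> inn \<psi> (\<pi> a \<psi>)}"
    and \<psi>: "\<psi> \<in> eigenspace hsmul (\<pi> J) \<mu>" "\<psi> \<noteq> 0"
  shows "eigenstate smul st P J \<mu> (vector_state \<psi>)"
proof -
  have "inn \<psi> \<psi> \<noteq> 0" "inn \<psi> \<psi> \<in> \<real>"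
    using \<psi> by (simp_all add: nonnegative_complex_is_real)
  moreover have "0 \<le> vector_state \<psi> a" if "a \<in> P" for a
    using P_nonneg that unfolding vector_state_def by (intro complex_divide_nonneg) auto
  ultimately have "is_state smul st P (u1 J) (vector_state \<psi>)"
    by (auto simp: is_state_def vector_state_def add_divide_distrib inn_rep_hermitian_real)
  then show ?thesis
    using rep_J_shift_eigenspace[OF \<psi>(1)] by (simp add: eigenstate_def vector_state_def)
qed

lemma R_mu_nonneg_on_eigenspace:
  assumes P_nonneg: "P \<subseteq> {a. \<forall>\<psi>. 0 \<le> inn \<psi> (\<pi> a \<psi>)}"
    and a: "a \<in> R_mu smul st P J \<mu>" and \<psi>: "\<psi> \<in> eigenspace hsmul (\<pi> J) \<mu>"
  shows "0 \<le> inn \<psi> (\<pi> a \<psi>)"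
proof (cases "\<psi> = 0")
  case False
  then have "0 \<le> vector_state \<psi> a * inn \<psi> \<psi>"
    using a vector_state_eigenstate[OF P_nonneg \<psi>] unfolding R_mu_def
    by (blast intro: mult_nonneg_nonneg inn_self_nonneg)
  with False show ?thesis
    by (simp add: vector_state_def)
qed simp

lemma V_mu_vanishes_on_eigenspace:
  assumes P_nonneg: "P \<subseteq> {a. \<forall>\<psi>. 0 \<le> inn \<psi> (\<pi> a \<psi>)}"
    and c: "c \<in> V_mu smul st P J \<mu>" and y: "y \<in> eigenspace hsmul (\<pi> J) \<mu>"
  shows "\<pi> c y = 0"
proof (rule vanishing_quadratic_form_on_eigenspace[OF _ ballI y])
  show "c \<in> u1 J"
    using c unfolding V_mu_def by blast
  fix x assume x: "x \<in> eigenspace hsmul (\<pi> J) \<mu>"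
  show "inn x (\<pi> c x) = 0"
  proof (cases "x = 0")
    case False
    have "vector_state x c = 0"
      using c vector_state_eigenstate[OF P_nonneg x False] unfolding V_mu_def by blast
    with False show ?thesis
      by (simp add: vector_state_def)
  qed simp
qed

end

section \<open>Reduction at an isolated eigenvalue\<close>

locale eigenvalue_gap = star_representation smul st hsmul inn \<pi>
  for smul :: "complex \<Rightarrow> 'a::ring_1 \<Rightarrow> 'a" and st
    and hsmul :: "complex \<Rightarrow> 'h::ab_group_add \<Rightarrow> 'h" and inn \<pi> +
  fixes P :: "'a set" and J :: 'a and \<mu> :: real
  assumes qm: "quadratic_module st P"
    and J_herm: "st J = J"
    and P_eq: "P = {a. pos_op_on UNIV inn (\<pi> a)}"
    and decomp: "\<forall>x. \<exists>e\<in>eigenspace hsmul (\<pi> J) \<mu>.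
                     \<exists>f\<in>orth_compl inn (eigenspace hsmul (\<pi> J) \<mu>). x = e + f"
    and gap: "\<exists>\<epsilon>>0. \<forall>f\<in>orth_compl inn (eigenspace hsmul (\<pi> J) \<mu>).
                 complex_of_real \<epsilon> * inn f f
                   \<le> inn f (\<pi> (J_shift smul J \<mu> * J_shift smul J \<mu>) f)"
begin

abbreviation "E \<equiv> eigenspace hsmul (\<pi> J) \<mu>"
abbreviation "F \<equiv> orth_compl inn E"
abbreviation "U \<equiv> u1 J"
abbreviation "K \<equiv> J_shift smul J \<mu>"
abbreviation "T \<equiv> {a \<in> hermitian_part st U. \<forall>x\<in>E. 0 \<le> inn x (\<pi> a x)}"

lemma P_nonneg: "P \<subseteq> {a. \<forall>\<psi>. 0 \<le> inn \<psi> (\<pi> a \<psi>)}"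
  using P_eq unfolding pos_op_on_def by blast

lemma mem_P_if_nonneg_on_components:
  assumes herm: "st a = a" and a: "a \<in> U"
    and nonneg_E: "\<forall>e\<in>E. 0 \<le> inn e (\<pi> a e)" and nonneg_F: "\<forall>f\<in>F. 0 \<le> inn f (\<pi> a f)"
  shows "a \<in> P"
proof -
  have "0 \<le> inn v (\<pi> a v)" for v
  proof -
    obtain e f where e: "e \<in> E" and f: "f \<in> F" and v: "v = e + f"
      using decomp by blast
    have "inn e (\<pi> a f) = 0" "inn f (\<pi> a e) = 0"
      using e f u1_maps_orth_compl[OF J_herm a f] u1_maps_eigenspace[OF a e]
      by (auto simp: orth_compl_def inn_commute[of f])
    then have "inn v (\<pi> a v) = inn e (\<pi> a e) + inn f (\<pi> a f)"
      using v by simp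
    then show ?thesis
      using nonneg_E nonneg_F e f by simp
  qed
  then show ?thesis
    unfolding P_eq pos_op_on_def using rep_adjoint[of _ a] herm by simp
qed

lemma gap_bound: "\<exists>\<epsilon>>0. \<forall>f\<in>F. of_real \<epsilon> * inn f f \<le> inn (\<pi> K f) (\<pi> K f)"
  using gap inn_rep_st_mult_self[of _ K] J_herm by simp

lemma shift_nonneg_on_orth_compl:
  assumes a: "a \<in> U" and herm: "st a = a"
    and \<epsilon>: "\<epsilon> > 0" and bound: "\<forall>f\<in>F. of_real \<epsilon> * inn f f \<le> inn (\<pi> K f) (\<pi> K f)"
    and f: "f \<in> F"
  shows "0 \<le> inn f (\<pi> (a + smul (of_real (1 / (2 * \<epsilon>))) ((K + a * K * a) * K)) f)"
proof -
  define g where "g = \<pi> a f"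
  have g: "g \<in> F"
    unfolding g_def using u1_maps_orth_compl[OF J_herm a f] .
  have "(K + a * K * a) * K = K * K + a * K * (a * K)"
    by (simp add: distrib_right mult.assoc)
  also have "\<dots> = st K * K + st (K * a) * (K * a)"
    using J_herm herm J_shift_commute[OF a] by (simp add: mult.assoc)
  finally have w_eq: "(K + a * K * a) * K = st K * K + st (K * a) * (K * a)" .
  have w: "inn f (\<pi> ((K + a * K * a) * K) f) = inn (\<pi> K f) (\<pi> K f) + inn (\<pi> K g) (\<pi> K g)"
    unfolding g_def w_eq by (simp only: rep_add inn_add_right inn_rep_st_mult_self) simp
  define c :: complex where "c = of_real (1 / (2 * \<epsilon>))"
  have "(inn f f + inn g g) / 2 = c * (of_real \<epsilon> * (inn f f + inn g g))"
    using \<epsilon> by (simp add: c_def field_simps)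
  also have "\<dots> \<le> c * inn f (\<pi> ((K + a * K * a) * K) f)"
    unfolding w distrib_left using \<epsilon> bound f g
    by (intro mult_left_mono add_mono) (auto simp: c_def less_eq_complex_def)
  finally have "inn f g + (inn f f + inn g g) / 2 \<le> inn f g + c * inn f (\<pi> ((K + a * K * a) * K) f)"
    by (rule add_left_mono)
  also have "\<dots> = inn f (\<pi> (a + smul c ((K + a * K * a) * K)) f)"
    unfolding g_def by (simp only: rep_add rep_smul inn_add_right inn_hsmul_right)
  finally have "inn f g + (inn f f + inn g g) / 2 \<le> inn f (\<pi> (a + smul c ((K + a * K * a) * K)) f)" .
  moreover have "inn g f = inn f g"
    unfolding g_def using rep_adjoint_left[of a f f] herm by simp
  ultimately show ?thesis
    unfolding c_def     using inn_cross_term_lower_bound order_trans by blast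
qed

lemma nonneg_on_eigenspace_decomposition:
  assumes "a \<in> T"
  shows "\<exists>x y. a = x + y \<and> x \<in> P \<inter> U \<and> y \<in> hermitian_part st (gen_star_ideal smul st U K)"
proof -
  have a: "a \<in> U" and herm: "st a = a" and nonneg_E: "\<forall>e\<in>E. 0 \<le> inn e (\<pi> a e)"
    using assms unfolding hermitian_part_def by auto
  obtain \<epsilon> where \<epsilon>: "\<epsilon> > 0" and bound: "\<forall>f\<in>F. of_real \<epsilon> * inn f f \<le> inn (\<pi> K f) (\<pi> K f)"
    using gap_bound by blast
  define b where "b = smul (of_real (1 / (2 * \<epsilon>))) (K + a * K * a)"
  have b: "b \<in> U" and st_b: "st b = b"
    unfolding b_def using a herm J_herm by (auto intro!: u1_smul u1_add u1_mult simp: mult.assoc)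
  have bK: "b * K \<in> U" "st (b * K) = b * K"
    using b st_b J_herm J_shift_commute[OF b] by (auto intro: u1_mult)
  have x: "a + b * K \<in> P"
  proof (rule mem_P_if_nonneg_on_components)
    show "\<forall>e\<in>E. 0 \<le> inn e (\<pi> (a + b * K) e)"
      using nonneg_E rep_J_shift_eigenspace by simp
    show "\<forall>f\<in>F. 0 \<le> inn f (\<pi> (a + b * K) f)"
      using shift_nonneg_on_orth_compl[OF a herm \<epsilon> bound] by (simp add: b_def)
  qed (use a herm bK in \<open>auto intro: u1_add\<close>)
  have "(- b) * K \<in> (\<lambda>b. b * K) ` U"
    by (rule image_eqI[of _ _ "- b"]) (simp_all add: b u1_minus)
  then have y: "(- b) * K \<in> hermitian_part st (gen_star_ideal smul st U K)"
    using bK unfolding hermitian_part_def gen_star_ideal_J_shift[OF J_herm] by simp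
  show ?thesis
    using a bK x y by (intro exI[of _ "a + b * K"] exI[of _ "(- b) * K"]) (auto intro: u1_add)
qed

lemma R_mu_eq_nonneg_on_eigenspace: "R_mu smul st P J \<mu> = T"
proof
  show "R_mu smul st P J \<mu> \<subseteq> T"
    using R_mu_nonneg_on_eigenspace[OF P_nonneg] unfolding R_mu_def by blast
  show "T \<subseteq> R_mu smul st P J \<mu>"
    using nonneg_on_eigenspace_decomposition positive_plus_ideal_subset_R_mu[OF qm J_herm] by blast
qed

lemma positive_plus_ideal_eq_R_mu:
  "{x + y | x y. x \<in> P \<inter> U \<and> y \<in> hermitian_part st (gen_star_ideal smul st U K)}
     = R_mu smul st P J \<mu>"
  using positive_plus_ideal_subset_R_mu[OF qm J_herm] nonneg_on_eigenspace_decomposition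
    R_mu_eq_nonneg_on_eigenspace by blast

lemma eigenstate_vanishes_if_vanishes_on_eigenspace:
  assumes h: "h \<in> U" "st h = h" and zero: "\<forall>y\<in>E. \<pi> h y = 0"
    and eig: "eigenstate smul st P J \<mu> \<omega>"
  shows "\<omega> h = 0"
proof -
  have "h \<in> R_mu smul st P J \<mu>" "- h \<in> R_mu smul st P J \<mu>"
    using h zero unfolding R_mu_eq_nonneg_on_eigenspace hermitian_part_def by (auto intro: u1_minus)
  then have "0 \<le> \<omega> h" "0 \<le> \<omega> (- h)"
    using eig unfolding R_mu_def by blast+
  moreover have "\<omega> (- h) = - \<omega> h"
    using eig h(1) unfolding eigenstate_def by (blast intro: state_minus)
  ultimately show ?thesis
    by simp
qed

lemma V_mu_iff: "c \<in> V_mu smul st P J \<mu> \<longleftrightarrow> c \<in> U \<and> (\<forall>x\<in>E. \<pi> c x = 0)"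
proof
  assume "c \<in> U \<and> (\<forall>x\<in>E. \<pi> c x = 0)"
  then have c: "c \<in> U" and zero: "\<forall>x\<in>E. \<pi> c x = 0" "\<forall>x\<in>E. \<pi> (st c) x = 0"
    using adjoint_vanishes_on_eigenspace[OF J_herm] by auto
  have parts_zero: "\<forall>x\<in>E. \<pi> (real_part c) x = 0" "\<forall>x\<in>E. \<pi> (imag_part c) x = 0"
    using zero by (simp_all add: real_part_def imag_part_def)
  have "\<omega> c = 0" if eig: "eigenstate smul st P J \<mu> \<omega>" for \<omega>
  proof -
    have \<omega>: "is_state smul st P U \<omega>"
      using eig unfolding eigenstate_def by blast
    have "\<omega> c = \<omega> (real_part c + smul \<i> (imag_part c))"
      using real_imag_decomposition[of c] by (rule arg_cong)
    also have "\<dots> = \<omega> (real_part c) + \<i> * \<omega> (imag_part c)"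
      using state_add[OF \<omega> u1_real_part[OF J_herm c] u1_smul[OF u1_imag_part[OF J_herm c]]]
        state_smul[OF \<omega> u1_imag_part[OF J_herm c]] by simp
    finally show ?thesis
      using eigenstate_vanishes_if_vanishes_on_eigenspace[OF _ _ _ eig] parts_zero
        u1_real_part[OF J_herm c] u1_imag_part[OF J_herm c] by simp
  qed
  with c show "c \<in> V_mu smul st P J \<mu>"
    unfolding V_mu_def by blast
qed (auto simp: V_mu_def intro: V_mu_vanishes_on_eigenspace[OF P_nonneg])

lemma red_class_eq:
  assumes a: "a \<in> U"
  shows "red_class smul st P J \<mu> a = {b \<in> U. \<forall>x\<in>E. \<pi> b x = \<pi> a x}"
  using a unfolding red_class_def V_mu_iff by (auto intro: u1_diff)

lemma red_class_eq_iff: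
  assumes "a \<in> U" "b \<in> U"
  shows "red_class smul st P J \<mu> a = red_class smul st P J \<mu> b \<longleftrightarrow> (\<forall>x\<in>E. \<pi> a x = \<pi> b x)"
  using assms unfolding red_class_eq[OF assms(1)] red_class_eq[OF assms(2)] by auto

definition red_rep :: "'a set \<Rightarrow> 'h \<Rightarrow> 'h" where
  "red_rep X = \<pi> (SOME a. a \<in> U \<and> X = red_class smul st P J \<mu> a)"

lemma red_rep_class:
  assumes a: "a \<in> U" and x: "x \<in> E"
  shows "red_rep (red_class smul st P J \<mu> a) x = \<pi> a x"
proof -
  let ?a' = "SOME a'. a' \<in> U \<and> red_class smul st P J \<mu> a = red_class smul st P J \<mu> a'"
  have "?a' \<in> U \<and> red_class smul st P J \<mu> a = red_class smul st P J \<mu> ?a'"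
    by (rule someI_ex) (use a in blast)
  then have "\<pi> a x = \<pi> ?a' x"
    using red_class_eq_iff[OF a] x by blast
  then show ?thesis
    unfolding red_rep_def by simp
qed

lemma red_algebra_cases:
  assumes "X \<in> red_algebra smul st P J \<mu>"
  obtains a where "a \<in> U" "X = red_class smul st P J \<mu> a" "\<forall>x\<in>E. red_rep X x = \<pi> a x"
  using assms red_rep_class unfolding red_algebra_def by blast

lemma red_rep_inj:
  assumes "X \<in> red_algebra smul st P J \<mu>" "Y \<in> red_algebra smul st P J \<mu>"
    and eq: "\<forall>x\<in>E. red_rep X x = red_rep Y x"
  shows "X = Y"
proof -
  obtain a where a: "a \<in> U" "X = red_class smul st P J \<mu> a" "\<forall>x\<in>E. red_rep X x = \<pi> a x"
    using assms(1) by (rule red_algebra_cases)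
  obtain b where b: "b \<in> U" "Y = red_class smul st P J \<mu> b" "\<forall>x\<in>E. red_rep Y x = \<pi> b x"
    using assms(2) by (rule red_algebra_cases)
  show ?thesis
    using a b eq red_class_eq_iff[OF a(1) b(1)] by simp
qed

lemma red_rep_linear:
  assumes X: "X \<in> red_algebra smul st P J \<mu>" and x: "x \<in> E" and y: "y \<in> E"
  shows "red_rep X (x + y) = red_rep X x + red_rep X y"
    and "red_rep X (hsmul c x) = hsmul c (red_rep X x)"
proof -
  obtain a where "\<forall>x\<in>E. red_rep X x = \<pi> a x"
    using X by (rule red_algebra_cases)
  then show "red_rep X (x + y) = red_rep X x + red_rep X y"
    and "red_rep X (hsmul c x) = hsmul c (red_rep X x)"
    using x y eigenspace_add[OF x y] eigenspace_hsmul[OF x] by simp_all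
qed

lemma red_rep_add:
  "a \<in> U \<Longrightarrow> b \<in> U \<Longrightarrow> x \<in> E \<Longrightarrow> red_rep (red_class smul st P J \<mu> (a + b)) x
     = red_rep (red_class smul st P J \<mu> a) x + red_rep (red_class smul st P J \<mu> b) x"
  by (simp add: red_rep_class u1_add)

lemma red_rep_smul:
  "a \<in> U \<Longrightarrow> x \<in> E \<Longrightarrow> red_rep (red_class smul st P J \<mu> (smul c a)) x
     = hsmul c (red_rep (red_class smul st P J \<mu> a) x)"
  by (simp add: red_rep_class u1_smul)

lemma red_rep_mult:
  "a \<in> U \<Longrightarrow> b \<in> U \<Longrightarrow> x \<in> E \<Longrightarrow> red_rep (red_class smul st P J \<mu> (a * b)) x
     = red_rep (red_class smul st P J \<mu> a) (red_rep (red_class smul st P J \<mu> b) x)"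
  by (simp add: red_rep_class u1_mult u1_maps_eigenspace)

lemma red_rep_one: "x \<in> E \<Longrightarrow> red_rep (red_class smul st P J \<mu> 1) x = x"
  by (simp add: red_rep_class)

lemma red_rep_adjoint:
  "a \<in> U \<Longrightarrow> x \<in> E \<Longrightarrow> y \<in> E \<Longrightarrow> inn y (red_rep (red_class smul st P J \<mu> a) x)
     = inn (red_rep (red_class smul st P J \<mu> (st a)) y) x"
  by (simp add: red_rep_class u1_st[OF J_herm] rep_adjoint)

lemma red_pos_cone_iff:
  assumes X: "X \<in> red_algebra smul st P J \<mu>"
  shows "X \<in> red_pos_cone smul st P J \<mu> \<longleftrightarrow> pos_op_on E inn (red_rep X)"
proof
  assume "X \<in> red_pos_cone smul st P J \<mu>"
  then obtain r where r: "r \<in> U" "st r = r" "\<forall>x\<in>E. 0 \<le> inn x (\<pi> r x)"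
    and Xr: "X = red_class smul st P J \<mu> r"
    unfolding red_pos_cone_def R_mu_eq_nonneg_on_eigenspace hermitian_part_def by blast
  then show "pos_op_on E inn (red_rep X)"
    unfolding pos_op_on_def using rep_adjoint_left[of r] by (simp add: red_rep_class)
next
  obtain a where a: "a \<in> U" and Xa: "X = red_class smul st P J \<mu> a" and rep: "\<forall>x\<in>E. red_rep X x = \<pi> a x"
    using X by (rule red_algebra_cases)
  assume "pos_op_on E inn (red_rep X)"
  then have sym: "\<forall>x\<in>E. \<forall>y\<in>E. inn x (\<pi> a y) = inn (\<pi> a x) y"
    and nonneg: "\<forall>x\<in>E. 0 \<le> inn x (\<pi> a x)"
    using rep unfolding pos_op_on_def by auto
  \<comment> \<open>on E the operator pi(a) is Hermitian, so a and its real part have the same class\<close>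
  have st_a: "\<pi> (st a) y - \<pi> a y = 0" if y: "y \<in> E" for y
  proof (rule eigenspace_orthogonal_imp_zero)
    show "\<pi> (st a) y - \<pi> a y \<in> E"
      using eigenspace_diff u1_maps_eigenspace u1_st[OF J_herm a] a y by blast
    show "\<forall>x\<in>E. inn x (\<pi> (st a) y - \<pi> a y) = 0"
      using sym y by (simp add: rep_adjoint[of _ "st a"])
  qed
  have real_part: "\<forall>y\<in>E. \<pi> (real_part a) y = \<pi> a y"
  proof
    fix y assume "y \<in> E"
    then have "\<pi> (real_part a) y = hsmul (1/2) (\<pi> a y) + hsmul (1/2) (\<pi> a y)"
      using st_a by (simp add: real_part_def)
    also have "\<dots> = \<pi> a y"
      by (simp flip: hsmul_add_left)
    finally show "\<pi> (real_part a) y = \<pi> a y" .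
  qed
  then have "real_part a \<in> R_mu smul st P J \<mu>"
    unfolding R_mu_eq_nonneg_on_eigenspace hermitian_part_def
    using nonneg u1_real_part[OF J_herm a] by simp
  moreover have "red_class smul st P J \<mu> (real_part a) = X"
    unfolding Xa using red_class_eq_iff[OF u1_real_part[OF J_herm a] a] real_part by simp
  ultimately show "X \<in> red_pos_cone smul st P J \<mu>"
    unfolding red_pos_cone_def by blast
qed

end

theorem proposition3p1:
  fixes smul :: "complex \<Rightarrow> 'a::ring_1 \<Rightarrow> 'a"
    and st :: "'a \<Rightarrow> 'a"
    and P :: "'a set"
    and J :: 'a
    and hsmul :: "complex \<Rightarrow> 'h::ab_group_add \<Rightarrow> 'h"
    and inn :: "'h \<Rightarrow> 'h \<Rightarrow> complex"
    and \<pi> :: "'a \<Rightarrow> 'h \<Rightarrow> 'h"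
    and \<mu> :: real
  assumes alg: "star_algebra smul st"
    and qm: "quadratic_module st P"
    and supp0: "supp P = {0}"
    and J_herm: "st J = J"
    and ph: "pre_hilbert hsmul inn"
    and rep: "star_rep smul st hsmul inn \<pi>"
    and inj: "inj \<pi>"
    and P_eq: "P = {a. pos_op_on UNIV inn (\<pi> a)}"
    and decomp: "\<forall>x. \<exists>e\<in>eigenspace hsmul (\<pi> J) \<mu>.
                     \<exists>f\<in>orth_compl inn (eigenspace hsmul (\<pi> J) \<mu>). x = e + f"
    and gap: "\<exists>\<epsilon>>0. \<forall>f\<in>orth_compl inn (eigenspace hsmul (\<pi> J) \<mu>).
                 complex_of_real \<epsilon> * inn f f
                   \<le> inn f (\<pi> (J_shift smul J \<mu> * J_shift smul J \<mu>) f)"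
  shows "{x + y | x y. x \<in> P \<inter> u1 J \<and>
                       y \<in> hermitian_part st (gen_star_ideal smul st (u1 J) (J_shift smul J \<mu>))}
           = R_mu smul st P J \<mu>
      \<and> R_mu smul st P J \<mu>
           = {a \<in> hermitian_part st (u1 J).
                \<forall>x\<in>eigenspace hsmul (\<pi> J) \<mu>. 0 \<le> inn x (\<pi> a x)}
      \<and> (\<exists>pired :: 'a set \<Rightarrow> 'h \<Rightarrow> 'h.
           (\<forall>a\<in>u1 J. \<forall>x\<in>eigenspace hsmul (\<pi> J) \<mu>.
               \<pi> a x \<in> eigenspace hsmul (\<pi> J) \<mu> \<and>
               pired (red_class smul st P J \<mu> a) x = \<pi> a x)
         \<and> (\<forall>X\<in>red_algebra smul st P J \<mu>. \<forall>Y\<in>red_algebra smul st P J \<mu>.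
               (\<forall>x\<in>eigenspace hsmul (\<pi> J) \<mu>. pired X x = pired Y x) \<longrightarrow> X = Y)
         \<and> (\<forall>X\<in>red_algebra smul st P J \<mu>. \<forall>x\<in>eigenspace hsmul (\<pi> J) \<mu>.
               \<forall>y\<in>eigenspace hsmul (\<pi> J) \<mu>. \<forall>c.
               pired X (x + y) = pired X x + pired X y \<and>
               pired X (hsmul c x) = hsmul c (pired X x))
         \<and> (\<forall>a\<in>u1 J. \<forall>b\<in>u1 J. \<forall>c. \<forall>x\<in>eigenspace hsmul (\<pi> J) \<mu>.
               \<forall>y\<in>eigenspace hsmul (\<pi> J) \<mu>.
               pired (red_class smul st P J \<mu> (a + b)) x
                 = pired (red_class smul st P J \<mu> a) x + pired (red_class smul st P J \<mu> b) x \<and>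
               pired (red_class smul st P J \<mu> (smul c a)) x
                 = hsmul c (pired (red_class smul st P J \<mu> a) x) \<and>
               pired (red_class smul st P J \<mu> (a * b)) x
                 = pired (red_class smul st P J \<mu> a) (pired (red_class smul st P J \<mu> b) x) \<and>
               pired (red_class smul st P J \<mu> 1) x = x \<and>
               inn y (pired (red_class smul st P J \<mu> a) x)
                 = inn (pired (red_class smul st P J \<mu> (st a)) y) x)
         \<and> (\<forall>X\<in>red_algebra smul st P J \<mu>.
               X \<in> red_pos_cone smul st P J \<mu> \<longleftrightarrow>
               pos_op_on (eigenspace hsmul (\<pi> J) \<mu>) inn (pired X)))"
proof -
  interpret eigenvalue_gap smul st hsmul inn \<pi> P J \<mu>
    by (intro eigenvalue_gap.intro eigenvalue_gap_axioms.intro star_representation.intro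
        star_alg.intro pre_hilbert_space.intro star_representation_axioms.intro) fact+
  show ?thesis
  proof (intro conjI exI[of _ red_rep])
    show "\<forall>X\<in>red_algebra smul st P J \<mu>. \<forall>Y\<in>red_algebra smul st P J \<mu>.
            (\<forall>x\<in>E. red_rep X x = red_rep Y x) \<longrightarrow> X = Y"
      using red_rep_inj by blast
  qed (use positive_plus_ideal_eq_R_mu R_mu_eq_nonneg_on_eigenspace red_pos_cone_iff in
      \<open>auto simp: red_rep_linear red_rep_add red_rep_smul red_rep_mult red_rep_one red_rep_adjoint
        intro: u1_maps_eigenspace red_rep_class\<close>)
qed

end
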